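(* Let $a\neq b$ be decimal digits. No absolute prime has a decimal representation in which the digit $a$ occurs at least three times and the digit $b$ occurs at least twice.
   Context: For a positive integer $N$ with decimal representation $d_1d_2\dots d_n$ (digits $d_k\in\{0,\dots,9\}$, $d_1\neq 0$), a permutation of the digits of $N$ is any integer $\sum_{k=1}^{n} d_{\sigma(k)}10^{n-k}$ with $\sigma$ a permutation of $\{1,\dots,n\}$. $N$ is called an absolute prime if every integer obtained by a permutation of the digits of $N$ (including $N$ itself) is prime. *)

theory Defs
  imports Main "HOL-Library.Multiset" "HOL-Computational_Algebra.Primes" "HOL-Combinatorics.Permutations"
begin

fun digits_rev :: "nat \<Rightarrow> nat list" where
  "digits_rev n = (if n = 0 then [] else n mod 10 # digits_rev (n div 10))"

definition dec_digits :: "nat \<Rightarrow> nat list" where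
  "dec_digits n = rev (digits_rev n)"

definition digit_value :: "nat list \<Rightarrow> nat" where
  "digit_value ds = (\<Sum>k<length ds. ds ! k * 10 ^ (length ds - 1 - k))"

definition absolute_prime :: "nat \<Rightarrow> bool" where
  "absolute_prime N \<longleftrightarrow> N > 0 \<and>
     (\<forall>\<sigma>::nat \<Rightarrow> nat. \<sigma> permutes {..<length (dec_digits N)} \<longrightarrow>
        prime (digit_value (map (\<lambda>k. dec_digits N ! \<sigma> k) [0..<length (dec_digits N)])))"

end

theory Submission
  imports Defs "HOL-Number_Theory.Cong"
begin

text \<open>
  Move all other digits to the front, forming a block \<open>R\<close>, and arrange the digits
  \<open>a, a, a, b, b\<close> behind it. With \<open>b\<close> in the places \<open>10^i\<close> and \<open>10^j\<close> the number is
  \<open>R\<cdot>10^5 + 11111 a + (b - a)(10^i + 10^j)\<close>, and it is at least 11.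
  If \<open>a\<close> or \<open>b\<close> is even, putting it in the units place makes the number even.
  Otherwise \<open>b - a\<close> is even, nonzero and smaller than 14 in absolute value, hence a unit
  modulo 7; as the sums \<open>10^i + 10^j\<close> run through all residues modulo 7, some
  arrangement is divisible by 7.
\<close>

lemma digit_value_Nil [simp]: "digit_value [] = 0"
  by (simp add: digit_value_def)

lemma digit_value_Cons [simp]: "digit_value (x # xs) = x * 10 ^ length xs + digit_value xs"
proof -
  have "digit_value (x # xs) = (\<Sum>k<Suc (length xs). (x # xs) ! k * 10 ^ (length xs - k))"
    by (simp add: digit_value_def)
  also have "\<dots> = x * 10 ^ length xs + (\<Sum>k<length xs. xs ! k * 10 ^ (length xs - Suc k))"
    by (subst sum.lessThan_Suc_shift) simp
  finally show ?thesis
    by (simp add: digit_value_def)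
qed

lemma digit_value_append: "digit_value (xs @ ys) = digit_value xs * 10 ^ length ys + digit_value ys"
  by (induction xs) (simp_all add: algebra_simps power_add)

lemma digit_value_map_rev_upt:
  "digit_value (map f (rev [0..<n])) = (\<Sum>k<n. f k * 10 ^ k)"
  by (induction n) simp_all

lemma absolute_prime_rearrangement:
  assumes "absolute_prime N" and "mset ys = mset (dec_digits N)"
  shows "prime (digit_value ys)"
proof -
  let ?ds = "dec_digits N"
  obtain p where "p permutes {..<length ?ds}" and "permute_list p ?ds = ys"
    using assms(2) by (rule mset_eq_permutation)
  then show ?thesis
    using assms(1) unfolding absolute_prime_def permute_list_def by metis
qed

lemma absolute_prime_digit_block:
  assumes "absolute_prime N" and "M \<subseteq># mset (dec_digits N)"
  obtains R where "\<And>w. mset w = M \<Longrightarrow> prime (R * 10 ^ size M + digit_value w)"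
proof -
  obtain r where r: "mset r = mset (dec_digits N) - M"
    using ex_mset by blast
  show thesis
  proof
    fix w
    assume w: "mset w = M"
    have "mset (r @ w) = mset (dec_digits N)"
      using r w subset_mset.diff_add[OF assms(2)] by simp
    then have "prime (digit_value (r @ w))"
      by (rule absolute_prime_rearrangement[OF assms(1)])
    moreover have "length w = size M"
      using w by (metis size_mset)
    ultimately show "prime (digit_value r * 10 ^ size M + digit_value w)"
      by (simp add: digit_value_append)
  qed
qed

definition pair_word :: "nat \<Rightarrow> nat \<Rightarrow> nat \<Rightarrow> nat \<Rightarrow> nat list" where
  "pair_word a b i j = map (\<lambda>k. if k = i \<or> k = j then b else a) (rev [0..<5])"

lemma place_pair_cases:
  fixes i j :: nat
  assumes "i < j" "j < 5"
  shows "(i, j) \<in> {(0,1),(0,2),(0,3),(0,4),(1,2),(1,3),(1,4),(2,3),(2,4),(3,4)}"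
  using assms by (auto simp: less_Suc_eq numeral_eq_Suc)

lemma digit_value_pair_word:
  assumes "i < j" "j < 5"
  shows "digit_value (pair_word a b i j) = a * (11111 - (10 ^ i + 10 ^ j)) + b * (10 ^ i + 10 ^ j)"
proof -
  have "digit_value (pair_word a b i j) = (\<Sum>k<5. (if k = i \<or> k = j then b else a) * 10 ^ k)"
    unfolding pair_word_def digit_value_map_rev_upt ..
  also have "\<dots> = a * (11111 - (10 ^ i + 10 ^ j)) + b * (10 ^ i + 10 ^ j)"
    using place_pair_cases[OF assms] by (auto simp: lessThan_nat_numeral)
  finally show ?thesis .
qed

lemma mset_pair_word:
  assumes "i < j" "j < 5"
  shows "mset (pair_word a b i j) = {#a, a, a, b, b#}"
  using place_pair_cases[OF assms] by (auto simp: pair_word_def upt_rec add_mset_commute)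

lemma place_pair_bounds:
  fixes i j :: nat
  assumes "i < j" "j < 5"
  shows "11 \<le> (10::nat) ^ i + 10 ^ j" and "(10::nat) ^ i + 10 ^ j \<le> 11000"
  using place_pair_cases[OF assms] by auto

text \<open>Modulo 7 the place values \<open>10^0, \<dots>, 10^4\<close> are \<open>1, 3, 2, 6, 4\<close>,
  and their pairwise sums hit every residue.\<close>

lemma place_pairs_cover_mod_7:
  "\<exists>i j. i < j \<and> j < 5 \<and> [10 ^ i + 10 ^ j = x] (mod (7::int))"
proof -
  have witness: "\<exists>i j. i < j \<and> j < 5 \<and> [10 ^ i + 10 ^ j = x] (mod (7::int))"
    if "i < j" "j < 5" "(10 ^ i + 10 ^ j) mod 7 = x mod (7::int)" for i j :: nat
    using that unfolding cong_def by blast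
  have "x mod 7 \<in> {0..6}" by simp
  then consider "x mod 7 = 0" | "x mod 7 = 1" | "x mod 7 = 2" | "x mod 7 = 3"
    | "x mod 7 = 4" | "x mod 7 = 5" | "x mod 7 = 6" by force
  then show ?thesis
  proof cases
    case 1 show ?thesis by (rule witness[of 0 3]) (use 1 in simp_all)
  next
    case 2 show ?thesis by (rule witness[of 2 3]) (use 2 in simp_all)
  next
    case 3 show ?thesis by (rule witness[of 1 3]) (use 3 in simp_all)
  next
    case 4 show ?thesis by (rule witness[of 0 2]) (use 4 in simp_all)
  next
    case 5 show ?thesis by (rule witness[of 0 1]) (use 5 in simp_all)
  next
    case 6 show ?thesis by (rule witness[of 0 4]) (use 6 in simp_all)
  next
    case 7 show ?thesis by (rule witness[of 2 4]) (use 7 in simp_all)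
  qed
qed

lemma place_pair_multiple_of_7:
  fixes K d :: int
  assumes "\<not> 7 dvd d"
  shows "\<exists>i j. i < j \<and> j < 5 \<and> 7 dvd K + d * (10 ^ i + 10 ^ j)"
proof -
  have "coprime d 7"
    using assms prime_imp_coprime[of 7 d] by (simp add: coprime_commute)
  then obtain e where e: "[d * e = 1] (mod 7)"
    using cong_solve_coprime_int by blast
  obtain i j where ij: "i < j" "j < 5" and s: "[10 ^ i + 10 ^ j = - K * e] (mod (7::int))"
    using place_pairs_cover_mod_7 by blast
  have "[K + d * (10 ^ i + 10 ^ j) = K + d * (- K * e)] (mod 7)"
    by (intro cong_add cong_mult cong_refl s)
  also have "K + d * (- K * e) = K - K * (d * e)"
    by (simp add: algebra_simps)
  also have "[\<dots> = K - K * 1] (mod 7)"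
    by (intro cong_diff cong_mult cong_refl e)
  finally show ?thesis
    using ij by (auto simp: cong_0_iff)
qed

lemma pair_word_value_ge_11:
  assumes "i < j" "j < 5" and "a \<noteq> b"
  shows "11 \<le> digit_value (pair_word a b i j)"
proof -
  let ?s = "10 ^ i + 10 ^ j :: nat"
  have s: "11 \<le> ?s" "?s \<le> 11000"
    using place_pair_bounds[OF assms(1,2)] by auto
  show ?thesis
  proof (cases "b = 0")
    case True
    then have "1 * 111 \<le> a * (11111 - ?s)"
      using assms(3) s(2) by (intro mult_le_mono) auto
    then show ?thesis
      using digit_value_pair_word[OF assms(1,2)] by simp
  next
    case False
    then have "1 * 11 \<le> b * ?s"
      using s(1) by (intro mult_le_mono) auto
    then show ?thesis
      using digit_value_pair_word[OF assms(1,2)] by simp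
  qed
qed

lemma composite_pair_word:
  assumes "a \<le> 9" "b \<le> 9" and "a \<noteq> b"
  shows "\<exists>i j. i < j \<and> j < 5 \<and> \<not> prime (R * 100000 + digit_value (pair_word a b i j))"
proof -
  have composite: "\<exists>i j. i < j \<and> j < 5 \<and> \<not> prime (R * 100000 + digit_value (pair_word a b i j))"
    if "i < j" "j < 5" "prime p" "p \<le> 7" "p dvd R * 100000 + digit_value (pair_word a b i j)"
    for p i j :: nat
  proof -
    have "\<not> prime (R * 100000 + digit_value (pair_word a b i j))"
      using primes_dvd_imp_eq[OF that(3) _ that(5)] that(4)
        pair_word_value_ge_11[OF that(1,2) assms(3)] by fastforce
    then show ?thesis
      using that(1,2) by blast
  qed
  consider "even b" | "even a" | "odd a" "odd b" by blast
  then show ?thesis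
  proof cases
    case 1
    then show ?thesis
      by (intro composite[of 0 1 2]) (simp_all add: digit_value_pair_word)
  next
    case 2
    then show ?thesis
      by (intro composite[of 3 4 2]) (simp_all add: digit_value_pair_word)
  next
    case 3
    let ?d = "int b - int a" and ?K = "int R * 100000 + 11111 * int a"
    have "\<not> 7 dvd ?d"
      using assms 3 by presburger
    then obtain i j where ij: "i < j" "j < 5" and dvd7: "7 dvd ?K + ?d * (10 ^ i + 10 ^ j)"
      using place_pair_multiple_of_7 by blast
    have n_eq: "int (R * 100000 + digit_value (pair_word a b i j)) = ?K + ?d * (10 ^ i + 10 ^ j)"
    proof -
      let ?s = "10 ^ i + 10 ^ j :: nat"
      have "int (a * (11111 - ?s)) = int a * (11111 - int ?s)"
        using place_pair_bounds(2)[OF ij] by (simp add: of_nat_diff)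
      then show ?thesis
        by (simp add: digit_value_pair_word[OF ij] algebra_simps)
    qed
    have "int 7 dvd int (R * 100000 + digit_value (pair_word a b i j))"
      using dvd7 unfolding n_eq by simp
    then have "7 dvd R * 100000 + digit_value (pair_word a b i j)"
      by (simp only: int_dvd_int_iff)
    then show ?thesis
      using ij by (intro composite[of i j 7]) simp_all
  qed
qed

theorem lemma3:
  fixes a b N :: nat
  assumes "a \<le> 9" and "b \<le> 9" and "a \<noteq> b"
    and "count (mset (dec_digits N)) a \<ge> 3"
    and "count (mset (dec_digits N)) b \<ge> 2"
  shows "\<not> absolute_prime N"
proof
  assume N: "absolute_prime N"
  have digits: "{#a, a, a, b, b#} \<subseteq># mset (dec_digits N)"
    using assms(3-5) by (auto simp: subseteq_mset_def)
  obtain R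
    where "\<And>w. mset w = {#a, a, a, b, b#} \<Longrightarrow> prime (R * 10 ^ size {#a, a, a, b, b#} + digit_value w)"
    using absolute_prime_digit_block[OF N digits] by blast
  then have R: "\<And>w. mset w = {#a, a, a, b, b#} \<Longrightarrow> prime (R * 100000 + digit_value w)"
    by simp
  obtain i j where "i < j" "j < 5" and "\<not> prime (R * 100000 + digit_value (pair_word a b i j))"
    using composite_pair_word[OF assms(1-3)] by blast
  then show False
    using R mset_pair_word by blast
qed

end
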